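(* The map $f$ is a bijection from the set of all permutations onto $\widehat{\mathcal{A}}$, with inverse $g$; that is, $f(g(w))=w$ for all $w\in\widehat{\mathcal{A}}$ and $g(f(\pi))=\pi$ for all permutations $\pi$.
   Context: A permutation of length $n\ge1$ is a word $\pi=\pi_1\cdots\pi_n$ containing each of $1,\dots,n$ exactly once. A descent of $\pi$ is an index $i$ with $\pi_i>\pi_{i+1}$. A run of $\pi$ is a maximal consecutive increasing sequence of letters; for a letter $c$ of $\pi$, $d_\pi(c)$ denotes the index of the run containing $c$, i.e. $1$ plus the number of descents at indices before the position of $c$. Words are finite sequences over the positive integers; $\max(w)$ is the largest letter of $w$. $\widehat{\mathcal{A}}$ is the set of words $w$ such that (AC1) every $i\in\{1,\dots,\max(w)\}$ occurs in $w$, and (AC2) for every $i\in\{1,\dots,\max(w)-1\}$, the rightmost occurrence of $i$ in $w$ is preceded by an occurrence of $i+1$. For a word $w$ and letter $j$, $p_w(j)$ is the list of positions $i$ with $w_i=j$, in increasing order. Define $f(\pi)=d_\pi(1)d_\pi(2)\cdots d_\pi(n)$ for a permutation $\pi$ of length $n$, and $g(w)$ to be the concatenation $p_w(1)p_w(2)\cdots p_w(\max(w))$ for $w\in\widehat{\mathcal{A}}$. *)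

theory Defs
  imports Main
begin

(* Words are lists of positive integers; positions and letters are 1-indexed:
   the i-th letter (1 <= i <= length w) is  w ! (i - 1). *)

definition is_perm :: "nat list \<Rightarrow> bool" where
  "is_perm \<pi> \<longleftrightarrow> length \<pi> \<ge> 1 \<and> distinct \<pi> \<and> set \<pi> = {1..length \<pi>}"

definition perms :: "nat list set" where
  "perms = {\<pi>. is_perm \<pi>}"

definition is_descent :: "nat list \<Rightarrow> nat \<Rightarrow> bool" where
  "is_descent \<pi> i \<longleftrightarrow> 1 \<le> i \<and> i < length \<pi> \<and> \<pi> ! (i - 1) > \<pi> ! i"

definition pos :: "nat list \<Rightarrow> nat \<Rightarrow> nat" where
  "pos \<pi> c = (LEAST i. 1 \<le> i \<and> i \<le> length \<pi> \<and> \<pi> ! (i - 1) = c)"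

definition run_idx :: "nat list \<Rightarrow> nat \<Rightarrow> nat" where
  "run_idx \<pi> c = 1 + card {i. i < pos \<pi> c \<and> is_descent \<pi> i}"

definition f_map :: "nat list \<Rightarrow> nat list" where
  "f_map \<pi> = map (run_idx \<pi>) [1..<length \<pi> + 1]"

definition maxw :: "nat list \<Rightarrow> nat" where
  "maxw w = Max (set w)"

definition positions :: "nat list \<Rightarrow> nat \<Rightarrow> nat list" where
  "positions w j = filter (\<lambda>i. w ! (i - 1) = j) [1..<length w + 1]"

definition g_map :: "nat list \<Rightarrow> nat list" where
  "g_map w = concat (map (positions w) [1..<maxw w + 1])"

(* the class \<hat>A: nonempty words over positive integers with (AC1), (AC2) *)
definition Ahat :: "nat list set" where
  "Ahat = {w. w \<noteq> [] \<and> 0 \<notin> set w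
      \<and> (\<forall>i \<in> {1..maxw w}. i \<in> set w)
      \<and> (\<forall>i \<in> {1..<maxw w}. \<exists>k l. 1 \<le> k \<and> k < l \<and> l \<le> length w
            \<and> w ! (k - 1) = i + 1 \<and> w ! (l - 1) = i
            \<and> (\<forall>m. l < m \<and> m \<le> length w \<longrightarrow> w ! (m - 1) \<noteq> i))}"

end

theory Submission
  imports Defs "HOL-Library.Product_Lexorder"
begin

(* Both directions rest on one observation about sort keys:

   - a permutation pi is strictly sorted by the key q \<mapsto> (run index of position q, pi_q),
     since consecutive letters either ascend inside a run or start the next run;
   - g(w) is strictly sorted by the key i \<mapsto> (w_i, i).

   For w = f(pi) the two keys agree letter by letter, so g(f(pi)) and pi are two
   lists with the same elements sorted by the same injective key, hence equal.
   Conversely, for w in Ahat the letter g_letter w q of w at position (g(w))_q is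
   nondecreasing in q; by (AC1) it rises by exactly one at each block boundary of
   g(w), and by (AC2) the block boundaries are exactly the descents of g(w).  So it
   obeys the recursion of the run index, and f(g(w)) = w.

   Finally f maps permutations into Ahat: every run index up to the last one occurs
   (AC1), and the last occurrence of i in f(pi) is at the last letter l of run i,
   while the first letter of run i + 1 is smaller than l, so i + 1 occurs before
   position l (AC2). *)

lemma strictly_sorted_by_key_unique:
  fixes key :: "'a \<Rightarrow> 'b::linorder"
  assumes "sorted_wrt (<) (map key xs)" "sorted_wrt (<) (map key ys)" "set xs = set ys"
  shows "xs = ys"
proof -
  have xs: "sorted (map key xs)" "distinct (map key xs)" using assms(1) strict_sorted_iff by auto
  have ys: "sorted (map key ys)" "distinct (map key ys)" using assms(2) strict_sorted_iff by auto
  have "map key xs = map key ys"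
    by (rule sorted_distinct_set_unique) (use xs ys assms(3) in auto)
  moreover have "inj_on key (set xs \<union> set ys)" using xs(2) assms(3) by (simp add: distinct_map)
  ultimately show ?thesis by (rule map_inj_on)
qed

section \<open>Run index of a position\<close>

(* Run index of the letter at 0-based position q: one plus the descents before it. *)
definition run_of :: "nat list \<Rightarrow> nat \<Rightarrow> nat" where
  "run_of \<pi> q = 1 + card {i. i < Suc q \<and> is_descent \<pi> i}"

lemma run_of_0: "run_of \<pi> 0 = 1"
  unfolding run_of_def is_descent_def by simp

lemma run_of_Suc:
  "run_of \<pi> (Suc q) = run_of \<pi> q + (if Suc q < length \<pi> \<and> \<pi>!q > \<pi>!Suc q then 1 else 0)"
proof -
  have split: "{i. i < Suc (Suc q) \<and> is_descent \<pi> i} = {i. i < Suc q \<and> is_descent \<pi> i}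
     \<union> (if is_descent \<pi> (Suc q) then {Suc q} else {})" by (auto simp: less_Suc_eq)
  have "is_descent \<pi> (Suc q) \<longleftrightarrow> Suc q < length \<pi> \<and> \<pi>!q > \<pi>!Suc q"
    unfolding is_descent_def by auto
  then show ?thesis unfolding run_of_def split by auto
qed

lemma run_of_mono: "q1 \<le> q2 \<Longrightarrow> run_of \<pi> q1 \<le> run_of \<pi> q2"
  by (rule lift_Suc_mono_le[of "run_of \<pi>"]) (simp add: run_of_Suc)

lemma run_of_eqI:
  assumes "K 0 = 1"
    and "\<And>q. Suc q < length \<pi> \<Longrightarrow> K (Suc q) = K q + (if \<pi>!q > \<pi>!Suc q then 1 else 0)"
    and "q < length \<pi>"
  shows "run_of \<pi> q = K q"
  using assms(3) by (induction q) (simp_all add: run_of_0 run_of_Suc assms(1,2))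

(* Since run_of moves in unit steps, every value between the first and a later one
   is reached, at a position where the next step goes up. *)
lemma run_of_step_between:
  assumes "run_of \<pi> 0 \<le> i" "i < run_of \<pi> q"
  shows "\<exists>q' < q. run_of \<pi> q' = i \<and> run_of \<pi> (Suc q') = Suc i"
  using assms(2)
proof (induction q)
  case 0
  then show ?case using assms(1) by simp
next
  case (Suc q)
  show ?case
  proof (cases "i < run_of \<pi> q")
    case True
    then show ?thesis using Suc.IH less_SucI by blast
  next
    case False
    then have "run_of \<pi> q = i" "run_of \<pi> (Suc q) = Suc i"
      using Suc.prems run_of_Suc[of \<pi> q] by (auto split: if_splits)
    then show ?thesis by blast
  qed
qed

section \<open>The class Ahat\<close>

lemma AhatI:
  assumes "w \<noteq> []" "0 \<notin> set w" "\<And>i. 1 \<le> i \<Longrightarrow> i \<le> maxw w \<Longrightarrow> i \<in> set w"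
    and "\<And>i. 1 \<le> i \<Longrightarrow> i < maxw w \<Longrightarrow>
      \<exists>k l. 1 \<le> k \<and> k < l \<and> l \<le> length w \<and> w!(k - 1) = i + 1 \<and> w!(l - 1) = i
        \<and> (\<forall>m. l < m \<and> m \<le> length w \<longrightarrow> w!(m - 1) \<noteq> i)"
  shows "w \<in> Ahat"
  unfolding Ahat_def mem_Collect_eq
proof (intro conjI ballI)
  fix i assume "i \<in> {1..<maxw w}"
  then show "\<exists>k l. 1 \<le> k \<and> k < l \<and> l \<le> length w \<and> w!(k - 1) = i + 1 \<and> w!(l - 1) = i
        \<and> (\<forall>m. l < m \<and> m \<le> length w \<longrightarrow> w!(m - 1) \<noteq> i)"
    using assms(4) by simp
qed (use assms(1-3) in auto)

(* The defining properties of Ahat, with (AC2) weakened to what the inverse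
   direction uses: some occurrence of i + 1 precedes some occurrence of i. *)
lemma AhatD:
  assumes "w \<in> Ahat"
  shows "w \<noteq> []" "0 \<notin> set w" "\<And>i. 1 \<le> i \<Longrightarrow> i \<le> maxw w \<Longrightarrow> i \<in> set w"
    and "\<And>j. 1 \<le> j \<Longrightarrow> j < maxw w \<Longrightarrow>
      \<exists>k l. 1 \<le> k \<and> k < l \<and> l \<le> length w \<and> w!(k - 1) = j + 1 \<and> w!(l - 1) = j"
proof -
  show "w \<noteq> []" "0 \<notin> set w" "\<And>i. 1 \<le> i \<Longrightarrow> i \<le> maxw w \<Longrightarrow> i \<in> set w"
    using assms unfolding Ahat_def by auto
  fix j assume "1 \<le> j" "j < maxw w"
  then have "j \<in> {1..<maxw w}" by simp
  then show "\<exists>k l. 1 \<le> k \<and> k < l \<and> l \<le> length w \<and> w!(k - 1) = j + 1 \<and> w!(l - 1) = j"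
    using assms unfolding Ahat_def mem_Collect_eq by blast
qed

section \<open>Permutations and the map f\<close>

lemma perm_nth_range: "is_perm \<pi> \<Longrightarrow> q < length \<pi> \<Longrightarrow> 1 \<le> \<pi>!q \<and> \<pi>!q \<le> length \<pi>"
  unfolding is_perm_def using nth_mem by fastforce

lemma perm_nth_surj: "is_perm \<pi> \<Longrightarrow> 1 \<le> c \<Longrightarrow> c \<le> length \<pi> \<Longrightarrow> \<exists>q < length \<pi>. \<pi>!q = c"
  unfolding is_perm_def by (metis atLeastAtMost_iff in_set_conv_nth)

lemma pos_nth: "distinct \<pi> \<Longrightarrow> q < length \<pi> \<Longrightarrow> pos \<pi> (\<pi>!q) = Suc q"
  unfolding pos_def
proof (rule Least_equality)
  assume "distinct \<pi>" "q < length \<pi>"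
  then show "1 \<le> Suc q \<and> Suc q \<le> length \<pi> \<and> \<pi> ! (Suc q - 1) = \<pi> ! q" by auto
  fix y assume y: "1 \<le> y \<and> y \<le> length \<pi> \<and> \<pi> ! (y - 1) = \<pi> ! q"
  then have "y - 1 = q" using \<open>distinct \<pi>\<close> \<open>q < length \<pi>\<close> nth_eq_iff_index_eq by fastforce
  then show "Suc q \<le> y" using y by auto
qed

lemma length_f_map [simp]: "length (f_map \<pi>) = length \<pi>"
  unfolding f_map_def by (simp del: upt_Suc)

lemma f_map_perm_nth:
  assumes "is_perm \<pi>" "q < length \<pi>"
  shows "f_map \<pi> ! (\<pi>!q - 1) = run_of \<pi> q"
proof -
  have "f_map \<pi> ! (\<pi>!q - 1) = run_idx \<pi> (\<pi>!q)"
    using perm_nth_range[OF assms] unfolding f_map_def by (subst nth_map) (auto simp del: upt_Suc)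
  also have "\<dots> = run_of \<pi> q"
    using pos_nth assms is_perm_def unfolding run_idx_def run_of_def by simp
  finally show ?thesis .
qed

lemma perm_sorted_by_run_key:
  assumes "distinct \<pi>"
  shows "sorted_wrt (<) (map (\<lambda>q. (run_of \<pi> q, \<pi>!q)) [0..<length \<pi>])"
proof -
  have "transp ((<) :: nat \<times> nat \<Rightarrow> _ \<Rightarrow> bool)" by (rule transpI) (auto simp: less_prod_def)
  moreover have "(run_of \<pi> q, \<pi>!q) < (run_of \<pi> (Suc q), \<pi>!Suc q)" if "Suc q < length \<pi>" for q
  proof -
    have "\<pi>!q \<noteq> \<pi>!Suc q" using assms that nth_eq_iff_index_eq by fastforce
    then show ?thesis using that run_of_Suc[of \<pi> q] by (auto simp: less_prod_def)
  qed
  ultimately show ?thesis by (simp add: sorted_wrt_iff_nth_Suc_transp)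
qed

lemma run_end_is_max:
  assumes "distinct \<pi>" "r < length \<pi>" "Suc q < length \<pi>"
    and "run_of \<pi> (Suc q) = Suc (run_of \<pi> q)" "run_of \<pi> r = run_of \<pi> q"
  shows "\<pi>!r \<le> \<pi>!q"
proof -
  consider "r < q" | "r = q" | "Suc q \<le> r" by linarith
  then show ?thesis
  proof cases
    case 1
    then have "(run_of \<pi> r, \<pi>!r) < (run_of \<pi> q, \<pi>!q)"
      using sorted_wrt_nth_less[OF perm_sorted_by_run_key[OF assms(1)] 1] assms(3) by simp
    then show ?thesis using assms(5) by simp
  next
    case 3
    then show ?thesis using run_of_mono[OF 3, of \<pi>] assms(4,5) by simp
  qed simp
qed

lemma set_f_map:
  assumes "is_perm \<pi>"
  shows "set (f_map \<pi>) = run_of \<pi> ` {..<length \<pi>}"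
proof (intro equalityI subsetI)
  fix x assume "x \<in> set (f_map \<pi>)"
  then obtain t where t: "t < length \<pi>" "x = f_map \<pi> ! t" by (auto simp: in_set_conv_nth)
  obtain q where "q < length \<pi>" "\<pi>!q = Suc t" using perm_nth_surj[OF assms, of "Suc t"] t by auto
  then show "x \<in> run_of \<pi> ` {..<length \<pi>}" using f_map_perm_nth[OF assms] t by force
next
  fix x assume "x \<in> run_of \<pi> ` {..<length \<pi>}"
  then obtain q where q: "q < length \<pi>" "x = run_of \<pi> q" by blast
  then have "\<pi>!q - 1 < length (f_map \<pi>)" using perm_nth_range[OF assms q(1)] by auto
  then show "x \<in> set (f_map \<pi>)" using f_map_perm_nth[OF assms q(1)] q(2) nth_mem by metis
qed

lemma maxw_f_map:
  assumes "is_perm \<pi>"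
  shows "maxw (f_map \<pi>) = run_of \<pi> (length \<pi> - 1)"
  unfolding maxw_def set_f_map[OF assms]
proof (rule Max_eqI)
  show "run_of \<pi> (length \<pi> - 1) \<in> run_of \<pi> ` {..<length \<pi>}"
    by (rule imageI) (use assms in \<open>auto simp: is_perm_def\<close>)
qed (auto intro: run_of_mono)

(* (AC2) for f(pi): the last occurrence of i is at the last letter of run i, and
   the first letter of run i + 1, where i + 1 occurs, is a smaller position. *)
lemma f_map_AC2:
  assumes "is_perm \<pi>" "1 \<le> i" "i < maxw (f_map \<pi>)"
  shows "\<exists>k l. 1 \<le> k \<and> k < l \<and> l \<le> length (f_map \<pi>)
            \<and> f_map \<pi> ! (k - 1) = i + 1 \<and> f_map \<pi> ! (l - 1) = i
            \<and> (\<forall>m. l < m \<and> m \<le> length (f_map \<pi>) \<longrightarrow> f_map \<pi> ! (m - 1) \<noteq> i)"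
proof -
  let ?n = "length \<pi>"
  have "run_of \<pi> 0 \<le> i" "i < run_of \<pi> (?n - 1)"
    using assms(2,3) maxw_f_map[OF assms(1)] run_of_0 by simp_all
  then obtain q where q: "q < ?n - 1" "run_of \<pi> q = i" "run_of \<pi> (Suc q) = Suc i"
    using run_of_step_between by blast
  have desc: "\<pi>!Suc q < \<pi>!q"
  proof (rule ccontr)
    assume "\<not> \<pi>!Suc q < \<pi>!q"
    then have "run_of \<pi> (Suc q) = run_of \<pi> q" by (simp add: run_of_Suc)
    then show False using q(2,3) by simp
  qed
  have qs: "q < ?n" "Suc q < ?n" using q by auto
  show ?thesis
  proof (intro exI conjI allI impI)
    show "1 \<le> \<pi>!Suc q" "\<pi>!Suc q < \<pi>!q" "\<pi>!q \<le> length (f_map \<pi>)"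
      using perm_nth_range[OF assms(1) qs(2)] perm_nth_range[OF assms(1) qs(1)] desc by auto
    show "f_map \<pi> ! (\<pi>!Suc q - 1) = i + 1" "f_map \<pi> ! (\<pi>!q - 1) = i"
      using f_map_perm_nth[OF assms(1)] qs q by auto
    fix m assume m: "\<pi>!q < m \<and> m \<le> length (f_map \<pi>)"
    then obtain r where r: "r < ?n" "\<pi>!r = m" using perm_nth_surj[OF assms(1), of m] by auto
    have "\<pi>!r \<le> \<pi>!q" if "run_of \<pi> r = i"
      using run_end_is_max[OF _ r(1) qs(2)] assms(1) q that unfolding is_perm_def by simp
    then show "f_map \<pi> ! (m - 1) \<noteq> i" using f_map_perm_nth[OF assms(1) r(1)] r m by auto
  qed
qed

lemma f_map_in_Ahat:
  assumes "is_perm \<pi>"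
  shows "f_map \<pi> \<in> Ahat"
proof (rule AhatI)
  show ne: "f_map \<pi> \<noteq> []" using assms unfolding is_perm_def by (auto simp flip: length_0_conv)
  show "0 \<notin> set (f_map \<pi>)" unfolding f_map_def run_idx_def by auto
  show "i \<in> set (f_map \<pi>)" if "1 \<le> i" "i \<le> maxw (f_map \<pi>)" for i
  proof (cases "i = maxw (f_map \<pi>)")
    case True
    then show ?thesis unfolding maxw_def using ne by simp
  next
    case False
    then have "run_of \<pi> 0 \<le> i" "i < run_of \<pi> (length \<pi> - 1)"
      using that maxw_f_map[OF assms] run_of_0 by auto
    then obtain q where "q < length \<pi> - 1" "run_of \<pi> q = i"
      using run_of_step_between by blast
    then show ?thesis unfolding set_f_map[OF assms] by auto
  qed
qed (rule f_map_AC2[OF assms])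

section \<open>Words and the map g\<close>

definition pos_key :: "nat list \<Rightarrow> nat \<Rightarrow> nat \<times> nat" where
  "pos_key w i = (w!(i-1), i)"

lemma letter_range:
  assumes "0 \<notin> set w" "x \<in> set w"
  shows "1 \<le> x \<and> x \<le> maxw w"
  using assms unfolding maxw_def by (metis Max_ge One_nat_def finite_set less_one not_le)

lemma set_positions: "set (positions w j) = {i. 1 \<le> i \<and> i \<le> length w \<and> w!(i-1) = j}"
  unfolding positions_def by auto

lemma set_g_map:
  assumes "0 \<notin> set w"
  shows "set (g_map w) = {1..length w}"
proof -
  have "set (g_map w) = (\<Union>j\<in>{1..maxw w}. {i. 1 \<le> i \<and> i \<le> length w \<and> w!(i-1) = j})"
    unfolding g_map_def by (simp del: upt_Suc add: set_positions atLeastLessThanSuc_atLeastAtMost)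
  also have "\<dots> = {1..length w}"
  proof (intro equalityI subsetI)
    fix i assume i: "i \<in> {1..length w}"
    then have "w!(i-1) \<in> set w" by auto
    then show "i \<in> (\<Union>j\<in>{1..maxw w}. {i. 1 \<le> i \<and> i \<le> length w \<and> w!(i-1) = j})"
      using letter_range[OF assms] i by auto
  qed auto
  finally show ?thesis .
qed

lemma sorted_positions: "sorted_wrt (<) (map (pos_key w) (positions w j))"
proof -
  have "sorted_wrt (<) (positions w j)" unfolding positions_def
    by (rule sorted_wrt_filter) (simp del: upt_Suc)
  then have "sorted_wrt (\<lambda>x y. pos_key w x < pos_key w y) (positions w j)"
    by (rule sorted_wrt_mono_rel[rotated]) (auto simp: set_positions pos_key_def)
  then show ?thesis by (simp add: sorted_wrt_map)
qed

lemma sorted_position_blocks: "sorted_wrt (<) (map (pos_key w) (concat (map (positions w) [a..<b])))"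
proof (induction b)
  case (Suc b)
  show ?case
  proof (cases "a \<le> b")
    case True
    have "\<forall>x\<in>set (concat (map (positions w) [a..<b])). \<forall>y\<in>set (positions w b).
        pos_key w x < pos_key w y"
      by (auto simp: set_positions pos_key_def)
    then show ?thesis using Suc.IH sorted_positions[of w b] True
      by (auto simp: sorted_wrt_append)
  qed simp
qed simp

lemma sorted_g_map: "sorted_wrt (<) (map (pos_key w) (g_map w))"
  unfolding g_map_def by (rule sorted_position_blocks)

lemma g_map_perm:
  assumes "w \<in> Ahat"
  shows "is_perm (g_map w)" "length (g_map w) = length w"
proof -
  have nz: "0 \<notin> set w" and ne: "w \<noteq> []" using AhatD[OF assms] by auto
  have "distinct (map (pos_key w) (g_map w))" using sorted_g_map[of w] strict_sorted_iff by blast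
  then have d: "distinct (g_map w)" using distinct_map by blast
  then show l: "length (g_map w) = length w" using distinct_card set_g_map[OF nz] by fastforce
  show "is_perm (g_map w)" unfolding is_perm_def using d set_g_map[OF nz] l ne
    by (simp add: Suc_leI)
qed

section \<open>g is a left inverse of f\<close>

lemma pos_key_f_map:
  assumes "is_perm \<pi>"
  shows "map (pos_key (f_map \<pi>)) \<pi> = map (\<lambda>q. (run_of \<pi> q, \<pi>!q)) [0..<length \<pi>]"
  by (rule nth_equalityI) (use f_map_perm_nth[OF assms] in \<open>auto simp: pos_key_def\<close>)

lemma g_map_f_map:
  assumes "is_perm \<pi>"
  shows "g_map (f_map \<pi>) = \<pi>"
proof (rule strictly_sorted_by_key_unique[where key = "pos_key (f_map \<pi>)"])
  show "sorted_wrt (<) (map (pos_key (f_map \<pi>)) (g_map (f_map \<pi>)))" by (rule sorted_g_map)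
  show "sorted_wrt (<) (map (pos_key (f_map \<pi>)) \<pi>)"
    unfolding pos_key_f_map[OF assms] using perm_sorted_by_run_key assms is_perm_def by blast
  have "0 \<notin> set (f_map \<pi>)" using AhatD(2)[OF f_map_in_Ahat[OF assms]] .
  then show "set (g_map (f_map \<pi>)) = set \<pi>"
    using set_g_map assms unfolding is_perm_def by simp
qed

section \<open>f is a left inverse of g on Ahat\<close>

(* The letter of w sitting at the position listed r-th in g(w) (0-based r), i.e. the
   block of g(w) that entry r belongs to. *)
definition g_letter :: "nat list \<Rightarrow> nat \<Rightarrow> nat" where
  "g_letter w r = w ! (g_map w ! r - 1)"

lemma g_letter_mono:
  assumes "r1 \<le> r2" "r2 < length (g_map w)"
  shows "g_letter w r1 \<le> g_letter w r2"
    and "g_letter w r1 = g_letter w r2 \<Longrightarrow> g_map w!r1 \<le> g_map w!r2"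
proof -
  have "pos_key w (g_map w!r1) \<le> pos_key w (g_map w!r2)"
  proof (cases "r1 = r2")
    case False
    then show ?thesis
      using sorted_wrt_nth_less[OF sorted_g_map[of w], of r1 r2] assms by simp
  qed simp
  then show "g_letter w r1 \<le> g_letter w r2"
    and "g_letter w r1 = g_letter w r2 \<Longrightarrow> g_map w!r1 \<le> g_map w!r2"
    unfolding pos_key_def g_letter_def by auto
qed

lemma g_map_hits_position:
  assumes "w \<in> Ahat" "1 \<le> p" "p \<le> length w"
  shows "\<exists>r < length w. g_map w!r = p"
  using perm_nth_surj[OF g_map_perm(1)[OF assms(1)]] assms g_map_perm(2) by simp

lemma g_letter_hits:
  assumes "w \<in> Ahat" "1 \<le> v" "v \<le> maxw w"
  shows "\<exists>r < length w. g_letter w r = v"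
proof -
  have "v \<in> set w" using AhatD(3)[OF assms(1)] assms(2,3) .
  then obtain t where t: "t < length w" "w!t = v" by (auto simp: in_set_conv_nth)
  then show ?thesis using g_map_hits_position[OF assms(1), of "Suc t"] by (auto simp: g_letter_def)
qed

lemma g_letter_range:
  assumes "w \<in> Ahat" "r < length w"
  shows "1 \<le> g_letter w r \<and> g_letter w r \<le> maxw w"
proof -
  have "g_map w!r - 1 < length w"
    using perm_nth_range[OF g_map_perm(1)[OF assms(1)]] assms g_map_perm(2) by fastforce
  then have "g_letter w r \<in> set w" unfolding g_letter_def by simp
  then show ?thesis using letter_range[OF AhatD(2)[OF assms(1)]] by blast
qed

lemma g_letter_0:
  assumes "w \<in> Ahat"
  shows "g_letter w 0 = 1"
proof -
  have n: "0 < length w" using AhatD(1)[OF assms] by simp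
  then have "1 \<le> maxw w" using g_letter_range[OF assms n] by simp
  then obtain r where r: "r < length w" "g_letter w r = 1" using g_letter_hits[OF assms] by auto
  then have "g_letter w 0 \<le> 1" using g_letter_mono(1)[of 0 r w] g_map_perm(2)[OF assms] by simp
  then show ?thesis using g_letter_range[OF assms n] by simp
qed

(* By (AC1) the letter never skips a value from one entry of g(w) to the next. *)
lemma g_letter_rise_by_one:
  assumes A: "w \<in> Ahat" and q: "Suc q < length w"
    and rise: "g_letter w q < g_letter w (Suc q)"
  shows "g_letter w (Suc q) = g_letter w q + 1"
proof -
  have len: "length (g_map w) = length w" using g_map_perm(2)[OF A] .
  have "g_letter w q < maxw w" using rise g_letter_range[OF A q] by simp
  then obtain r where r: "r < length w" "g_letter w r = g_letter w q + 1"
    using g_letter_hits[OF A, of "g_letter w q + 1"] by auto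
  have "Suc q \<le> r"
  proof (rule ccontr)
    assume "\<not> Suc q \<le> r"
    then show False using g_letter_mono(1)[of r q w] r q len by simp
  qed
  then have "g_letter w (Suc q) \<le> g_letter w r" using g_letter_mono(1)[of "Suc q" r w] r len by simp
  then show ?thesis using r(2) rise by simp
qed

(* By (AC2) a rise of the letter from j to j + 1 is a descent of g(w): the entry
   before the rise is at least the last position carrying j, the entry after it is
   at most the first position carrying j + 1, and the latter precedes the former. *)
lemma g_letter_rise_is_descent:
  assumes A: "w \<in> Ahat" and q: "Suc q < length w"
    and rise: "g_letter w q < g_letter w (Suc q)"
  shows "g_map w!Suc q < g_map w!q"
proof -
  define j where "j = g_letter w q"
  have len: "length (g_map w) = length w" using g_map_perm(2)[OF A] .
  have next_letter: "g_letter w (Suc q) = j + 1" using g_letter_rise_by_one[OF A q rise] j_def by simp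
  have j: "1 \<le> j" "j < maxw w" using g_letter_range[OF A] q rise j_def by fastforce+
  obtain k l where kl: "1 \<le> k" "k < l" "l \<le> length w" "w!(k - 1) = j + 1" "w!(l - 1) = j"
    using AhatD(4)[OF A j] by blast
  obtain rk where rk: "rk < length w" "g_map w!rk = k" using g_map_hits_position[OF A, of k] kl by auto
  obtain rl where rl: "rl < length w" "g_map w!rl = l" using g_map_hits_position[OF A, of l] kl by auto
  have Krk: "g_letter w rk = j + 1" and Krl: "g_letter w rl = j"
    using rk rl kl unfolding g_letter_def by simp_all
  have "Suc q \<le> rk"
  proof (rule ccontr)
    assume "\<not> Suc q \<le> rk"
    then show False using g_letter_mono(1)[of rk q w] rk(1) q len Krk j_def by simp
  qed
  then have "g_map w!Suc q \<le> k" using g_letter_mono(2)[of "Suc q" rk w] rk Krk next_letter len by simp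
  moreover have "rl \<le> q"
  proof (rule ccontr)
    assume "\<not> rl \<le> q"
    then show False using g_letter_mono(1)[of "Suc q" rl w] rl(1) len Krl next_letter by simp
  qed
  then have "l \<le> g_map w!q" using g_letter_mono(2)[of rl q w] rl q len Krl j_def by simp
  ultimately show ?thesis using kl(2) by simp
qed

lemma g_letter_Suc:
  assumes A: "w \<in> Ahat" and q: "Suc q < length w"
  shows "g_letter w (Suc q) = g_letter w q + (if g_map w!q > g_map w!Suc q then 1 else 0)"
proof (cases "g_letter w q < g_letter w (Suc q)")
  case True
  then show ?thesis using g_letter_rise_by_one[OF A q] g_letter_rise_is_descent[OF A q] by simp
next
  case False
  have len: "length (g_map w) = length w" using g_map_perm(2)[OF A] .
  then have eq: "g_letter w q = g_letter w (Suc q)" using False g_letter_mono(1)[of q "Suc q" w] q by simp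
  have "distinct (g_map w)" using g_map_perm(1)[OF A] unfolding is_perm_def by simp
  then have "g_map w!q \<noteq> g_map w!Suc q" using q len nth_eq_iff_index_eq by fastforce
  then have "g_map w!q < g_map w!Suc q" using g_letter_mono(2)[of q "Suc q" w] eq q len by simp
  then show ?thesis using eq by simp
qed

lemma f_map_g_map:
  assumes A: "w \<in> Ahat"
  shows "f_map (g_map w) = w"
proof (rule nth_equalityI)
  let ?\<pi> = "g_map w"
  have len: "length ?\<pi> = length w" using g_map_perm(2)[OF A] .
  have run: "run_of ?\<pi> q = g_letter w q" if "q < length w" for q
    by (rule run_of_eqI) (use that len g_letter_0[OF A] g_letter_Suc[OF A] in auto)
  show "length (f_map ?\<pi>) = length w" using len by simp
  fix t assume "t < length (f_map ?\<pi>)"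
  then obtain q where q: "q < length w" "?\<pi>!q = Suc t"
    using g_map_hits_position[OF A, of "Suc t"] len by auto
  then show "f_map ?\<pi> ! t = w ! t"
    using f_map_perm_nth[OF g_map_perm(1)[OF A], of q] run[OF q(1)] len by (simp add: g_letter_def)
qed

theorem mainTheorem2:
  shows "bij_betw f_map perms Ahat
    \<and> (\<forall>w \<in> Ahat. f_map (g_map w) = w)
    \<and> (\<forall>\<pi> \<in> perms. g_map (f_map \<pi>) = \<pi>)"
proof (intro conjI ballI)
  show "bij_betw f_map perms Ahat"
    by (rule bij_betw_byWitness[where f' = g_map])
       (auto simp: perms_def g_map_f_map f_map_g_map f_map_in_Ahat g_map_perm)
  show "\<And>w. w \<in> Ahat \<Longrightarrow> f_map (g_map w) = w" by (rule f_map_g_map)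
  show "\<And>\<pi>. \<pi> \<in> perms \<Longrightarrow> g_map (f_map \<pi>) = \<pi>" by (simp add: perms_def g_map_f_map)
qed

end
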